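(* Let $\lambda$ be a partition, $\nu\in\mathcal{U}(\lambda)$, and $(x,y)=\nu/\lambda$. Let $u,v\ge0$ be integers, $c=(x+u,y+v)$, $c_1=(x+u,y)$ and $c_2=(x,y+v)$. Then \[ P^{q,t}_\lambda(\nu\mid c)=P^{q,t}_\lambda(\nu\mid c_1)\,P^{q,t}_\lambda(\nu\mid c_2). \]
   Context: Partitions are Young diagrams in French convention: cells $(x,y)\in\mathbb{Z}_{>0}^2$ with $x\le\lambda_y$; $\lambda'$ is the conjugate, with $\lambda_j=0$ for $j>\lambda'_1$ and $\lambda'_i=0$ for $i>\lambda_1$. $\mathcal{U}(\lambda)$ is the set of partitions obtained by adding one cell to $\lambda$. $\overline{\lambda}=\mathbb{Z}_{>0}^2\setminus\lambda$. For $c=(x,y)\in\overline{\lambda}$: ${\rm arm}_\lambda(c)=\{(i,y):\lambda_y<i<x\}$, ${\rm leg}_\lambda(c)=\{(x,j):\lambda'_x<j<y\}$, $a(c)=|{\rm arm}_\lambda(c)|$, $\ell(c)=|{\rm leg}_\lambda(c)|$; $c$ is an outer corner of $\lambda$ iff $a(c)=\ell(c)=0$. For $c'\in{\rm arm}_\lambda(c)\cup{\rm leg}_\lambda(c)$, $P(c\rightarrow c')=q^{a(c)-i}\frac{t^{\ell(c)}(1-q)}{1-q^{a(c)}t^{\ell(c)}}$ if $c'=(x-i,y)$, and $P(c\rightarrow c')=t^{j-1}\frac{1-t}{1-q^{a(c)}t^{\ell(c)}}$ if $c'=(x,y-j)$. The exterior $(q,t)$-hook walk from $c$ terminates if $c$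 is an outer corner, otherwise moves to $c'$ with probability $P(c\rightarrow c')$ and repeats; $P^{q,t}_\lambda(\nu\mid c)$ is the probability (a rational function in $q,t$) that it terminates at the cell $\nu/\lambda$. *)

theory Defs
  imports Main
begin

text \<open>Partitions: a function lam :: nat => nat, with lam y the length of row y (y >= 1),
  weakly decreasing, eventually zero, normalised by lam 0 = 0.  Cells are (x,y) with
  1 <= x <= lam y (French convention).\<close>

definition is_partition :: "(nat \<Rightarrow> nat) \<Rightarrow> bool" where
  "is_partition lam \<longleftrightarrow> lam 0 = 0 \<and> (\<forall>j\<ge>1. lam (Suc j) \<le> lam j) \<and> (\<exists>N. \<forall>j\<ge>N. lam j = 0)"

definition cells :: "(nat \<Rightarrow> nat) \<Rightarrow> (nat \<times> nat) set" where
  "cells lam = {(x, y). 1 \<le> x \<and> 1 \<le> y \<and> x \<le> lam y}"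

definition conj :: "(nat \<Rightarrow> nat) \<Rightarrow> nat \<Rightarrow> nat" where
  "conj lam x = (if x = 0 then 0 else card {j. 1 \<le> j \<and> x \<le> lam j})"

text \<open>nu is in U(lam), and nu/lam is the cell c.\<close>
definition adds_cell :: "(nat \<Rightarrow> nat) \<Rightarrow> (nat \<Rightarrow> nat) \<Rightarrow> nat \<times> nat \<Rightarrow> bool" where
  "adds_cell lam nu c \<longleftrightarrow> is_partition lam \<and> is_partition nu \<and>
     c \<notin> cells lam \<and> cells nu = insert c (cells lam)"

definition arm :: "(nat \<Rightarrow> nat) \<Rightarrow> nat \<times> nat \<Rightarrow> (nat \<times> nat) set" where
  "arm lam c = {(i, snd c) | i. lam (snd c) < i \<and> i < fst c}"

definition leg :: "(nat \<Rightarrow> nat) \<Rightarrow> nat \<times> nat \<Rightarrow> (nat \<times> nat) set" where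
  "leg lam c = {(fst c, j) | j. conj lam (fst c) < j \<and> j < snd c}"

definition armlen :: "(nat \<Rightarrow> nat) \<Rightarrow> nat \<times> nat \<Rightarrow> nat" where
  "armlen lam c = card (arm lam c)"

definition leglen :: "(nat \<Rightarrow> nat) \<Rightarrow> nat \<times> nat \<Rightarrow> nat" where
  "leglen lam c = card (leg lam c)"

definition trans_prob :: "'a::field \<Rightarrow> 'a \<Rightarrow> (nat \<Rightarrow> nat) \<Rightarrow> nat \<times> nat \<Rightarrow> nat \<times> nat \<Rightarrow> 'a" where
  "trans_prob q t lam c c' =
     (let a = armlen lam c; l = leglen lam c in
      if c' \<in> arm lam c then
        q ^ (a - (fst c - fst c')) * (t ^ l * (1 - q)) / (1 - q ^ a * t ^ l)
      else if c' \<in> leg lam c then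
        t ^ (snd c - snd c' - 1) * (1 - t) / (1 - q ^ a * t ^ l)
      else 0)"

lemma arm_less: "c' \<in> arm lam c \<Longrightarrow> fst c' + snd c' < fst c + snd c"
  by (auto simp: arm_def)

lemma leg_less: "c' \<in> leg lam c \<Longrightarrow> fst c' + snd c' < fst c + snd c"
  by (auto simp: leg_def)

text \<open>hookwalk q t lam c d = probability that the exterior (q,t)-hook walk on lam started at c
  terminates at the cell d.\<close>
function hookwalk :: "'a::field \<Rightarrow> 'a \<Rightarrow> (nat \<Rightarrow> nat) \<Rightarrow> nat \<times> nat \<Rightarrow> nat \<times> nat \<Rightarrow> 'a" where
  "hookwalk q t lam c d =
     (if armlen lam c = 0 \<and> leglen lam c = 0 then (if c = d then 1 else 0)
      else (\<Sum>c'\<in>arm lam c \<union> leg lam c. trans_prob q t lam c c' * hookwalk q t lam c' d))"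
  by pat_completeness auto
termination
  by (relation "measure (\<lambda>(q, t, lam, c, d). fst c + snd c)")
     (auto dest: arm_less leg_less)

declare hookwalk.simps[simp del]

definition hook_prob :: "'a::field \<Rightarrow> 'a \<Rightarrow> (nat \<Rightarrow> nat) \<Rightarrow> (nat \<Rightarrow> nat) \<Rightarrow> nat \<times> nat \<Rightarrow> 'a" where
  "hook_prob q t lam nu c = hookwalk q t lam c (THE d. cells nu = insert d (cells lam) \<and> d \<notin> cells lam)"

end

theory Submission
  imports Defs
begin

text \<open>Let \<open>(x, y) = \<nu>/\<lambda>\<close> and \<open>F m n = P(\<nu> | (x + m, y + n))\<close>. Because \<open>(x, y)\<close> is an outer
  corner of \<open>\<lambda>\<close>, the hook of \<open>(x + m, y + n)\<close> has arm length \<open>m + s n\<close> and leg length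
  \<open>n + r m\<close>, where \<open>s n\<close> is the arm length of \<open>(x, y + n)\<close> and \<open>r m\<close> the leg length of
  \<open>(x + m, y)\<close>. A walk can only reach \<open>(x, y)\<close> through cells weakly north-east of it, so \<open>F\<close>
  obeys a recurrence over the rectangle \<open>[0, m] \<times> [0, n]\<close> whose coefficients depend only on
  \<open>m, n, s n, r m\<close>. The product \<open>F m 0 * F 0 n\<close> obeys the same recurrence: its arm part reduces
  to the recurrence along row \<open>y\<close>, its leg part to the one along column \<open>x\<close>, and the two
  denominators recombine by
  \<open>(1 - q\<^sup>m t\<^bsup>r m\<^esup>) q\<^bsup>s n\<^esup> t\<^sup>n + (1 - q\<^bsup>s n\<^esup> t\<^sup>n) = 1 - q\<^bsup>m + s n\<^esup> t\<^bsup>n + r m\<^esup>\<close>.\<close>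

lemma hook_recurrence_factorizes:
  fixes F :: "nat \<Rightarrow> nat \<Rightarrow> 'a::field" and s r :: "nat \<Rightarrow> nat"
  assumes F00: "F 0 0 = 1" and s0: "s 0 = 0" and r0: "r 0 = 0"
    and nondegenerate: "\<And>m n. 0 < m + n \<Longrightarrow> q ^ (m + s n) * t ^ (n + r m) \<noteq> 1"
    and recurrence: "\<And>m n. 0 < m + n \<Longrightarrow> F m n * (1 - q ^ (m + s n) * t ^ (n + r m)) =
        q ^ s n * t ^ (n + r m) * (1 - q) * (\<Sum>k<m. q ^ k * F k n) +
        (\<Sum>k<n. t ^ (n - 1 - k) * (1 - t) * F m k)"
  shows "F m n = F m 0 * F 0 n"
proof (induction "m + n" arbitrary: m n rule: less_induct)
  case less
  show ?case
  proof (cases "m = 0 \<or> n = 0")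
    case True
    then show ?thesis using F00 by auto
  next
    case False
    then have "0 < m + n" by simp
    have row: "F m 0 * (1 - q ^ m * t ^ r m) = t ^ r m * (1 - q) * (\<Sum>k<m. q ^ k * F k 0)"
      using recurrence[of m 0] False s0 by simp
    have column: "F 0 n * (1 - q ^ s n * t ^ n) = (\<Sum>k<n. t ^ (n - 1 - k) * (1 - t) * F 0 k)"
      using recurrence[of 0 n] False r0 by simp
    define D where "D = 1 - q ^ (m + s n) * t ^ (n + r m)"
    have "F m n * D = q ^ s n * t ^ (n + r m) * (1 - q) * (\<Sum>k<m. q ^ k * F k n) +
        (\<Sum>k<n. t ^ (n - 1 - k) * (1 - t) * F m k)"
      using recurrence[OF \<open>0 < m + n\<close>] by (simp add: D_def)
    also have "(\<Sum>k<m. q ^ k * F k n) = F 0 n * (\<Sum>k<m. q ^ k * F k 0)"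
      unfolding sum_distrib_left
      by (rule sum.cong[OF refl], subst less[of _ n]) (auto simp: mult_ac)
    also have "(\<Sum>k<n. t ^ (n - 1 - k) * (1 - t) * F m k) =
        F m 0 * (\<Sum>k<n. t ^ (n - 1 - k) * (1 - t) * F 0 k)"
      unfolding sum_distrib_left
      by (rule sum.cong[OF refl], subst less[of m]) (auto simp: mult_ac)
    also have "q ^ s n * t ^ (n + r m) * (1 - q) * (F 0 n * (\<Sum>k<m. q ^ k * F k 0)) +
        F m 0 * (\<Sum>k<n. t ^ (n - 1 - k) * (1 - t) * F 0 k) =
        q ^ s n * t ^ n * F 0 n * (F m 0 * (1 - q ^ m * t ^ r m)) + F m 0 * (F 0 n * (1 - q ^ s n * t ^ n))"
      unfolding row column by (simp add: power_add algebra_simps)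
    also have "\<dots> = F m 0 * F 0 n * D"
      by (simp add: D_def power_add algebra_simps)
    finally show ?thesis
      using nondegenerate[OF \<open>0 < m + n\<close>] by (simp add: D_def)
  qed
qed

lemma hookwalk_eq_0_if_not_dominating:
  "fst c < fst d \<or> snd c < snd d \<Longrightarrow> hookwalk q t lam c d = 0"
proof (induction q t lam c d rule: hookwalk.induct)
  case (1 q t lam c d)
  show ?case
  proof (cases "armlen lam c = 0 \<and> leglen lam c = 0")
    case True
    then show ?thesis using 1(2) by (auto simp: hookwalk.simps)
  next
    case False
    have "hookwalk q t lam c' d = 0" if "c' \<in> arm lam c \<union> leg lam c" for c'
      using 1(1)[OF False that] 1(2) that by (auto simp: arm_def leg_def)
    then show ?thesis
      unfolding hookwalk.simps[of q t lam c d] if_not_P[OF False] by simp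
  qed
qed

lemma arm_eq_image: "arm lam (X, Y) = (\<lambda>i. (i, Y)) ` {lam Y<..<X}"
  by (auto simp: arm_def)

lemma leg_eq_image: "leg lam (X, Y) = (\<lambda>j. (X, j)) ` {conj lam X<..<Y}"
  by (auto simp: leg_def)

lemma armlen_eq: "armlen lam (X, Y) = X - Suc (lam Y)"
  unfolding armlen_def arm_eq_image by (subst card_image) (auto simp: inj_on_def)

lemma leglen_eq: "leglen lam (X, Y) = Y - Suc (conj lam X)"
  unfolding leglen_def leg_eq_image by (subst card_image) (auto simp: inj_on_def)

lemma trans_prob_arm:
  assumes "lam Y < i" "i < X"
  shows "trans_prob q t lam (X, Y) (i, Y) =
    q ^ (armlen lam (X, Y) - (X - i)) * (t ^ leglen lam (X, Y) * (1 - q)) /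
    (1 - q ^ armlen lam (X, Y) * t ^ leglen lam (X, Y))"
  using assms by (simp add: trans_prob_def Let_def arm_def)

lemma trans_prob_leg:
  assumes "conj lam X < j" "j < Y"
  shows "trans_prob q t lam (X, Y) (X, j) =
    t ^ (Y - j - 1) * (1 - t) / (1 - q ^ armlen lam (X, Y) * t ^ leglen lam (X, Y))"
  using assms by (simp add: trans_prob_def Let_def arm_def leg_def)

lemma hookwalk_unfold_dominated:
  assumes "\<not> (armlen lam (X, Y) = 0 \<and> leglen lam (X, Y) = 0)"
    and "lam Y < x" "conj lam X < y"
  shows "hookwalk q t lam (X, Y) (x, y) =
    (\<Sum>i\<in>{x..<X}. trans_prob q t lam (X, Y) (i, Y) * hookwalk q t lam (i, Y) (x, y)) +
    (\<Sum>j\<in>{y..<Y}. trans_prob q t lam (X, Y) (X, j) * hookwalk q t lam (X, j) (x, y))"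
proof -
  let ?step = "\<lambda>c'. trans_prob q t lam (X, Y) c' * hookwalk q t lam c' (x, y)"
  have "arm lam (X, Y) \<inter> leg lam (X, Y) = {}"
    by (auto simp: arm_def leg_def)
  then have "hookwalk q t lam (X, Y) (x, y) =
      (\<Sum>c'\<in>arm lam (X, Y). ?step c') + (\<Sum>c'\<in>leg lam (X, Y). ?step c')"
    unfolding hookwalk.simps[of q t lam "(X, Y)"] if_not_P[OF assms(1)]
    by (intro sum.union_disjoint) (auto simp: arm_eq_image leg_eq_image)
  also have "(\<Sum>c'\<in>arm lam (X, Y). ?step c') = (\<Sum>i\<in>{lam Y<..<X}. ?step (i, Y))"
    unfolding arm_eq_image by (subst sum.reindex) (auto simp: inj_on_def)
  also have "\<dots> = (\<Sum>i\<in>{x..<X}. ?step (i, Y))"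
    by (rule sum.mono_neutral_right) (use assms(2) in \<open>auto simp: hookwalk_eq_0_if_not_dominating\<close>)
  also have "(\<Sum>c'\<in>leg lam (X, Y). ?step c') = (\<Sum>j\<in>{conj lam X<..<Y}. ?step (X, j))"
    unfolding leg_eq_image by (subst sum.reindex) (auto simp: inj_on_def)
  also have "\<dots> = (\<Sum>j\<in>{y..<Y}. ?step (X, j))"
    by (rule sum.mono_neutral_right) (use assms(3) in \<open>auto simp: hookwalk_eq_0_if_not_dominating\<close>)
  finally show ?thesis .
qed

lemma is_partition_antimono:
  assumes "is_partition lam" "1 \<le> i" "i \<le> j"
  shows "lam j \<le> lam i"
proof (rule lift_Suc_antimono_le_ivl[where f = lam and N = "{1..}"])
  show "lam (Suc n) \<le> lam n" if "n \<in> {1..}" for n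
    using assms(1) that unfolding is_partition_def by simp
qed (use assms(2,3) in auto)

context
  fixes lam nu :: "nat \<Rightarrow> nat" and x y :: nat
  assumes adds: "adds_cell lam nu (x, y)"
begin

lemma added_cell_ge_1: "1 \<le> x" "1 \<le> y"
  using adds by (auto simp: adds_cell_def cells_def)

lemma added_cell_cells: "cells nu = insert (x, y) (cells lam)" "(x, y) \<notin> cells lam"
  using adds by (auto simp: adds_cell_def)

lemma lam_added_row: "lam y = x - 1"
proof -
  have "x - 1 \<le> lam y"
  proof (cases "x = 1")
    case False
    have "(x, y) \<in> cells nu"
      using added_cell_cells(1) by simp
    with False have "(x - 1, y) \<in> cells nu"
      by (auto simp: cells_def)
    with False have "(x - 1, y) \<in> cells lam"
      using added_cell_cells(1) added_cell_ge_1 by auto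
    then show ?thesis by (simp add: cells_def)
  qed simp
  then show ?thesis
    using added_cell_cells(2) added_cell_ge_1 by (auto simp: cells_def)
qed

lemma lam_above_added_row: "y \<le> Y \<Longrightarrow> lam Y < x"
  using is_partition_antimono[of lam y Y] adds added_cell_ge_1 lam_added_row
  by (auto simp: adds_cell_def)

lemma added_cell_column_iff: "1 \<le> j \<Longrightarrow> x \<le> lam j \<longleftrightarrow> j < y"
proof
  assume "x \<le> lam j"
  then show "j < y"
    by (metis lam_above_added_row leD not_less)
next
  assume "1 \<le> j" "j < y"
  have "is_partition lam" "is_partition nu"
    using adds by (auto simp: adds_cell_def)
  have "x \<le> nu y"
    using added_cell_cells(1) by (auto simp: cells_def)
  moreover have "nu y \<le> nu (y - 1)"
    using is_partition_antimono[OF \<open>is_partition nu\<close>, of "y - 1" y] \<open>1 \<le> j\<close> \<open>j < y\<close> by simp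
  ultimately have "(x, y - 1) \<in> cells nu"
    using added_cell_ge_1 \<open>1 \<le> j\<close> \<open>j < y\<close> by (auto simp: cells_def)
  then have "(x, y - 1) \<in> cells lam"
    using added_cell_cells(1) \<open>j < y\<close> by auto
  then have "x \<le> lam (y - 1)"
    by (simp add: cells_def)
  moreover have "lam (y - 1) \<le> lam j"
    using is_partition_antimono[OF \<open>is_partition lam\<close>, of j "y - 1"] \<open>1 \<le> j\<close> \<open>j < y\<close> by simp
  ultimately show "x \<le> lam j"
    by simp
qed

lemma conj_right_of_added_column: "x \<le> X \<Longrightarrow> conj lam X < y"
proof -
  assume "x \<le> X"
  then have "j < y" if "1 \<le> j" "X \<le> lam j" for j
    using added_cell_column_iff[OF that(1)] that(2) by (meson le_trans)
  then have "{j. 1 \<le> j \<and> X \<le> lam j} \<subseteq> {1..<y}"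
    by auto
  then have "card {j. 1 \<le> j \<and> X \<le> lam j} \<le> y - 1"
    using card_mono[of "{1..<y}"] by fastforce
  then show ?thesis
    using added_cell_ge_1 by (auto simp: conj_def)
qed

lemma conj_added_column: "conj lam x = y - 1"
proof -
  have "{j. 1 \<le> j \<and> x \<le> lam j} = {1..<y}"
    using added_cell_column_iff by auto
  then show ?thesis
    using added_cell_ge_1 by (simp add: conj_def)
qed

lemma armlen_above_added_cell: "armlen lam (x + m, y + n) = m + armlen lam (x, y + n)"
  using lam_above_added_row[of "y + n"] by (simp add: armlen_eq)

lemma leglen_right_of_added_cell: "leglen lam (x + m, y + n) = n + leglen lam (x + m, y)"
  using conj_right_of_added_column[of "x + m"] by (simp add: leglen_eq)

lemma added_cell_outer_corner: "armlen lam (x, y) = 0" "leglen lam (x, y) = 0"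
  using lam_added_row conj_added_column by (simp_all add: armlen_eq leglen_eq)

lemma hook_prob_eq_hookwalk: "hook_prob q t lam nu c = hookwalk q t lam c (x, y)"
proof -
  have "(THE d. cells nu = insert d (cells lam) \<and> d \<notin> cells lam) = (x, y)"
  proof (rule the_equality)
    show "cells nu = insert (x, y) (cells lam) \<and> (x, y) \<notin> cells lam"
      using added_cell_cells by simp
    show "d = (x, y)" if "cells nu = insert d (cells lam) \<and> d \<notin> cells lam" for d
      using that added_cell_cells by (metis insertCI insertE)
  qed
  then show ?thesis by (simp add: hook_prob_def)
qed

lemma hookwalk_to_added_cell_recurrence:
  fixes q t :: "'a::field"
  defines "F \<equiv> \<lambda>m n. hookwalk q t lam (x + m, y + n) (x, y)"
    and "s \<equiv> \<lambda>n. armlen lam (x, y + n)"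
    and "r \<equiv> \<lambda>m. leglen lam (x + m, y)"
  assumes "0 < m + n" and nondegenerate: "q ^ (m + s n) * t ^ (n + r m) \<noteq> 1"
  shows "F m n * (1 - q ^ (m + s n) * t ^ (n + r m)) =
    q ^ s n * t ^ (n + r m) * (1 - q) * (\<Sum>k<m. q ^ k * F k n) +
    (\<Sum>k<n. t ^ (n - 1 - k) * (1 - t) * F m k)"
proof -
  let ?c = "(x + m, y + n)"
  define l where "l = n + r m"
  define D where "D = 1 - q ^ (m + s n) * t ^ l"
  have hook: "armlen lam ?c = m + s n" "leglen lam ?c = l"
    using armlen_above_added_cell leglen_right_of_added_cell by (simp_all add: l_def s_def r_def)
  have "D \<noteq> 0"
    using nondegenerate by (simp add: D_def l_def)
  have arm_step: "trans_prob q t lam ?c (x + k, y + n) = q ^ (s n + k) * t ^ l * (1 - q) / D"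
    if "k < m" for k
    using trans_prob_arm[of lam "y + n" "x + k" "x + m"] lam_above_added_row[of "y + n"] that hook
    by (simp add: D_def mult.assoc)
  have leg_step: "trans_prob q t lam ?c (x + m, y + k) = t ^ (n - 1 - k) * (1 - t) / D"
    if "k < n" for k
    using trans_prob_leg[of lam "x + m" "y + k" "y + n"] conj_right_of_added_column[of "x + m"] that hook
    by (simp add: D_def)
  have "F m n =
      (\<Sum>i\<in>{x..<x + m}. trans_prob q t lam ?c (i, y + n) * hookwalk q t lam (i, y + n) (x, y)) +
      (\<Sum>j\<in>{y..<y + n}. trans_prob q t lam ?c (x + m, j) * hookwalk q t lam (x + m, j) (x, y))"
    unfolding F_def using \<open>0 < m + n\<close> hook
    by (intro hookwalk_unfold_dominated lam_above_added_row conj_right_of_added_column)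
      (auto simp: l_def)
  also have "(\<Sum>i\<in>{x..<x + m}. trans_prob q t lam ?c (i, y + n) * hookwalk q t lam (i, y + n) (x, y)) =
      (\<Sum>k<m. q ^ (s n + k) * t ^ l * (1 - q) * F k n) / D"
    by (simp add: sum.atLeastLessThan_shift_0[of _ x] atLeast0LessThan arm_step F_def
        sum_divide_distrib)
  also have "(\<Sum>j\<in>{y..<y + n}. trans_prob q t lam ?c (x + m, j) * hookwalk q t lam (x + m, j) (x, y)) =
      (\<Sum>k<n. t ^ (n - 1 - k) * (1 - t) * F m k) / D"
    by (simp add: sum.atLeastLessThan_shift_0[of _ y] atLeast0LessThan leg_step F_def
        sum_divide_distrib)
  finally have "F m n * D = (\<Sum>k<m. q ^ (s n + k) * t ^ l * (1 - q) * F k n) +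
      (\<Sum>k<n. t ^ (n - 1 - k) * (1 - t) * F m k)"
    using \<open>D \<noteq> 0\<close> by (simp add: field_simps)
  then show ?thesis
    by (simp add: D_def l_def sum_distrib_left power_add mult_ac)
qed

end

theorem lemma6p6:
  fixes q t :: "'a::field"
    and lam nu :: "nat \<Rightarrow> nat"
    and x y u v :: nat
  assumes generic: "\<And>a l. a + l > 0 \<Longrightarrow> q ^ a * t ^ l \<noteq> 1"
    and nu: "adds_cell lam nu (x, y)"
  shows "hook_prob q t lam nu (x + u, y + v) =
           hook_prob q t lam nu (x + u, y) * hook_prob q t lam nu (x, y + v)"
proof -
  define F where "F m n = hookwalk q t lam (x + m, y + n) (x, y)" for m n
  define s where "s n = armlen lam (x, y + n)" for n
  define r where "r m = leglen lam (x + m, y)" for m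
  have "F u v = F u 0 * F 0 v"
  proof (rule hook_recurrence_factorizes)
    show "F 0 0 = 1" "s 0 = 0" "r 0 = 0"
      using added_cell_outer_corner[OF nu]
      by (simp_all add: F_def s_def r_def hookwalk.simps[of q t lam "(x, y)"])
    show nondegenerate: "q ^ (m + s n) * t ^ (n + r m) \<noteq> 1" if "0 < m + n" for m n
      using generic[of "m + s n" "n + r m"] that by auto
    show "F m n * (1 - q ^ (m + s n) * t ^ (n + r m)) =
        q ^ s n * t ^ (n + r m) * (1 - q) * (\<Sum>k<m. q ^ k * F k n) +
        (\<Sum>k<n. t ^ (n - 1 - k) * (1 - t) * F m k)" if "0 < m + n" for m n
      using hookwalk_to_added_cell_recurrence[OF nu that nondegenerate[OF that, unfolded s_def r_def]]
      unfolding F_def s_def r_def by simp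
  qed
  then show ?thesis
    by (simp add: hook_prob_eq_hookwalk[OF nu] F_def)
qed

end
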